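(* Let $G=\bigsqcup_{i=1}^t K_{n_i}$ be a disjoint union of complete graphs with $t\ge2$ and all $n_i\ge1$. Then $\mathcal{K}^{\mathsf{TJ}}(G)=\{k:k\ge2\}$.
   Context: All graphs are finite, simple, undirected. A $k$-clique of a graph $H$ is a set of $k$ pairwise adjacent vertices. For a graph $H$ and integer $k\ge1$, the Token Jumping graph $\mathsf{TJ}_k(H)$ has as vertices the $k$-cliques of $H$, and two $k$-cliques $A,B$ are adjacent iff $|A\cap B|=k-1$. For a graph $G$, $\mathcal{K}^{\mathsf{TJ}}(G)=\{k\ge1:\ \exists H,\ \mathsf{TJ}_k(H)\cong G\}$. *)

theory Defs
  imports Main
begin

definition simple_graph :: "'a set \<Rightarrow> ('a \<Rightarrow> 'a \<Rightarrow> bool) \<Rightarrow> bool" where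
  "simple_graph V E \<longleftrightarrow> finite V \<and> (\<forall>x y. E x y \<longrightarrow> x \<in> V \<and> y \<in> V)
     \<and> (\<forall>x y. E x y \<longrightarrow> E y x) \<and> (\<forall>x. \<not> E x x)"

definition cliques :: "'a set \<Rightarrow> ('a \<Rightarrow> 'a \<Rightarrow> bool) \<Rightarrow> nat \<Rightarrow> 'a set set" where
  "cliques V E k = {C. C \<subseteq> V \<and> finite C \<and> card C = k \<and> (\<forall>x\<in>C. \<forall>y\<in>C. x \<noteq> y \<longrightarrow> E x y)}"

definition TJ_vertices :: "'a set \<Rightarrow> ('a \<Rightarrow> 'a \<Rightarrow> bool) \<Rightarrow> nat \<Rightarrow> 'a set set" where
  "TJ_vertices V E k = cliques V E k"

definition TJ_edges :: "'a set \<Rightarrow> ('a \<Rightarrow> 'a \<Rightarrow> bool) \<Rightarrow> nat \<Rightarrow> 'a set \<Rightarrow> 'a set \<Rightarrow> bool" where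
  "TJ_edges V E k A B \<longleftrightarrow> A \<in> cliques V E k \<and> B \<in> cliques V E k \<and> card (A \<inter> B) = k - 1"

definition graph_iso :: "'a set \<Rightarrow> ('a \<Rightarrow> 'a \<Rightarrow> bool) \<Rightarrow> 'b set \<Rightarrow> ('b \<Rightarrow> 'b \<Rightarrow> bool) \<Rightarrow> bool" where
  "graph_iso V1 E1 V2 E2 \<longleftrightarrow>
     (\<exists>f. bij_betw f V1 V2 \<and> (\<forall>x\<in>V1. \<forall>y\<in>V1. E1 x y \<longleftrightarrow> E2 (f x) (f y)))"

text \<open>K^TJ(G): the set of k >= 1 such that TJ_k(H) is isomorphic to G for some finite simple graph H.
  Host graphs H are taken with vertices in nat (every finite graph is isomorphic to one such).\<close>
definition K_TJ :: "'a set \<Rightarrow> ('a \<Rightarrow> 'a \<Rightarrow> bool) \<Rightarrow> nat set" where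
  "K_TJ V E = {k. k \<ge> 1 \<and> (\<exists>(HV :: nat set) HE. simple_graph HV HE \<and>
       graph_iso (TJ_vertices HV HE k) (TJ_edges HV HE k) V E)}"

text \<open>Disjoint union of complete graphs K_{n 0}, ..., K_{n (t-1)}: vertex (i,j) is the j-th vertex of the i-th clique.\<close>
definition dcliques_V :: "nat \<Rightarrow> (nat \<Rightarrow> nat) \<Rightarrow> (nat \<times> nat) set" where
  "dcliques_V t n = {(i, j). i < t \<and> j < n i}"

definition dcliques_E :: "nat \<Rightarrow> (nat \<Rightarrow> nat) \<Rightarrow> nat \<times> nat \<Rightarrow> nat \<times> nat \<Rightarrow> bool" where
  "dcliques_E t n u v \<longleftrightarrow> u \<in> dcliques_V t n \<and> v \<in> dcliques_V t n \<and> fst u = fst v \<and> snd u \<noteq> snd v"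

end

theory Submission
  imports Defs
begin

(* For k = 1 any two distinct 1-cliques share k - 1 = 0 vertices, so TJ_1(H) is always complete,
   whereas a disjoint union of at least two nonempty cliques is not.  For k >= 2 take as host, for
   each component K_{n_i}, a clique K_{k-1} (the core) joined to n_i pairwise non-adjacent leaves:
   its k-cliques are exactly the core together with one leaf, two of them share the k - 1 core
   vertices iff they lie in the same component, and otherwise they are disjoint. *)

lemma graph_iso_sym:
  assumes "graph_iso V1 E1 V2 E2"
  shows "graph_iso V2 E2 V1 E1"
proof -
  obtain f where f: "bij_betw f V1 V2" and edges: "\<forall>x\<in>V1. \<forall>y\<in>V1. E1 x y \<longleftrightarrow> E2 (f x) (f y)"
    using assms unfolding graph_iso_def by blast
  let ?g = "inv_into V1 f"
  have "bij_betw ?g V2 V1"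
    using f by (rule bij_betw_inv_into)
  moreover have "\<forall>x\<in>V2. \<forall>y\<in>V2. E2 x y \<longleftrightarrow> E1 (?g x) (?g y)"
  proof (intro ballI)
    fix x y assume "x \<in> V2" "y \<in> V2"
    then have "?g x \<in> V1" "?g y \<in> V1" "f (?g x) = x" "f (?g y) = y"
      using f by (auto simp: bij_betw_def inv_into_into f_inv_into_f)
    then show "E2 x y \<longleftrightarrow> E1 (?g x) (?g y)"
      using edges by metis
  qed
  ultimately show ?thesis
    unfolding graph_iso_def by blast
qed

lemma graph_iso_trans:
  assumes "graph_iso V1 E1 V2 E2" and "graph_iso V2 E2 V3 E3"
  shows "graph_iso V1 E1 V3 E3"
proof -
  obtain f where f: "bij_betw f V1 V2" "\<forall>x\<in>V1. \<forall>y\<in>V1. E1 x y \<longleftrightarrow> E2 (f x) (f y)"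
    using assms(1) unfolding graph_iso_def by blast
  obtain g where g: "bij_betw g V2 V3" "\<forall>x\<in>V2. \<forall>y\<in>V2. E2 x y \<longleftrightarrow> E3 (g x) (g y)"
    using assms(2) unfolding graph_iso_def by blast
  have "bij_betw (g \<circ> f) V1 V3"
    using f(1) g(1) by (rule bij_betw_trans)
  moreover have "\<forall>x\<in>V1. \<forall>y\<in>V1. E1 x y \<longleftrightarrow> E3 ((g \<circ> f) x) ((g \<circ> f) y)"
    using f g by (simp add: bij_betw_apply)
  ultimately show ?thesis
    unfolding graph_iso_def by blast
qed

lemma graph_iso_adjacent:
  assumes "graph_iso V1 E1 V2 E2" and "\<forall>x\<in>V1. \<forall>y\<in>V1. x \<noteq> y \<longrightarrow> E1 x y"
    and "x \<in> V2" "y \<in> V2" "x \<noteq> y"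
  shows "E2 x y"
proof -
  obtain g where g: "bij_betw g V2 V1" "\<forall>x\<in>V2. \<forall>y\<in>V2. E2 x y \<longleftrightarrow> E1 (g x) (g y)"
    using graph_iso_sym[OF assms(1)] unfolding graph_iso_def by blast
  have "g x \<noteq> g y"
    using g(1) assms(3-5) by (auto simp: bij_betw_def dest: inj_onD)
  moreover have "g x \<in> V1" "g y \<in> V1"
    using g(1) assms(3,4) by (auto simp: bij_betw_apply)
  ultimately show ?thesis
    using g(2) assms(2-4) by blast
qed

subsection \<open>Token Jumping graphs up to relabelling of the host\<close>

definition image_edges :: "('a \<Rightarrow> 'b) \<Rightarrow> 'a set \<Rightarrow> ('a \<Rightarrow> 'a \<Rightarrow> bool) \<Rightarrow> 'b \<Rightarrow> 'b \<Rightarrow> bool" where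
  "image_edges g V E a b \<longleftrightarrow> (\<exists>x\<in>V. \<exists>y\<in>V. a = g x \<and> b = g y \<and> E x y)"

lemma image_edges_iff:
  assumes "inj_on g V" "x \<in> V" "y \<in> V"
  shows "image_edges g V E (g x) (g y) \<longleftrightarrow> E x y"
  using assms unfolding image_edges_def by (auto dest: inj_onD)

lemma simple_graph_image:
  assumes "simple_graph V E" and "inj_on g V"
  shows "simple_graph (g ` V) (image_edges g V E)"
  using assms unfolding simple_graph_def image_edges_def by (blast dest: inj_onD)

lemma cliques_image:
  assumes "simple_graph V E" and inj: "inj_on g V"
  shows "cliques (g ` V) (image_edges g V E) k = ((`) g) ` cliques V E k"
proof (intro equalityI subsetI)
  fix D assume D: "D \<in> cliques (g ` V) (image_edges g V E) k"
  let ?C = "V \<inter> g -` D"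
  have image: "g ` ?C = D"
    using D unfolding cliques_def by auto
  have "finite ?C"
    using assms(1) unfolding simple_graph_def by auto
  moreover have "card ?C = k"
    using D image card_image[OF inj_on_subset[OF inj, of ?C]] unfolding cliques_def by auto
  moreover have "E x y" if "x \<in> ?C" "y \<in> ?C" "x \<noteq> y" for x y
    using that D image_edges_iff[OF inj, of x y E] inj
    unfolding cliques_def by (auto dest: inj_onD)
  ultimately have "?C \<in> cliques V E k"
    unfolding cliques_def by auto
  then show "D \<in> ((`) g) ` cliques V E k"
    using image by blast
next
  fix D assume "D \<in> ((`) g) ` cliques V E k"
  then obtain C where C: "C \<in> cliques V E k" and D: "D = g ` C" by blast
  have CV: "C \<subseteq> V"
    using C unfolding cliques_def by auto
  have "image_edges g V E (g x) (g y)" if "x \<in> C" "y \<in> C" "g x \<noteq> g y" for x y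
  proof -
    have "x \<in> V" "y \<in> V" "E x y"
      using that C CV unfolding cliques_def by auto
    then show ?thesis
      by (simp add: image_edges_iff[OF inj])
  qed
  then show "D \<in> cliques (g ` V) (image_edges g V E) k"
    using C CV card_image[OF inj_on_subset[OF inj CV]] unfolding D cliques_def by auto
qed

lemma graph_iso_TJ_image:
  assumes "simple_graph V E" and inj: "inj_on g V"
  shows "graph_iso (TJ_vertices V E k) (TJ_edges V E k)
    (TJ_vertices (g ` V) (image_edges g V E) k) (TJ_edges (g ` V) (image_edges g V E) k)"
proof -
  have "inj_on ((`) g) (cliques V E k)"
  proof (rule inj_onI)
    fix A B assume "A \<in> cliques V E k" "B \<in> cliques V E k" "g ` A = g ` B"
    then show "A = B"
      using inj_on_image_eq_iff[OF inj] unfolding cliques_def by blast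
  qed
  then have "bij_betw ((`) g) (cliques V E k) (cliques (g ` V) (image_edges g V E) k)"
    by (simp add: bij_betw_def cliques_image[OF assms])
  moreover have "\<forall>A\<in>cliques V E k. \<forall>B\<in>cliques V E k.
    TJ_edges V E k A B \<longleftrightarrow> TJ_edges (g ` V) (image_edges g V E) k (g ` A) (g ` B)"
  proof (intro ballI)
    fix A B assume A: "A \<in> cliques V E k" and B: "B \<in> cliques V E k"
    have AV: "A \<subseteq> V" and BV: "B \<subseteq> V"
      using A B unfolding cliques_def by auto
    then have "card (g ` A \<inter> g ` B) = card (A \<inter> B)"
      using card_image[OF inj_on_subset[OF inj, of "A \<inter> B"]]
      by (simp add: inj_on_image_Int[OF inj AV BV, symmetric] le_infI1)
    moreover have "g ` A \<in> cliques (g ` V) (image_edges g V E) k"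
      "g ` B \<in> cliques (g ` V) (image_edges g V E) k"
      using A B by (simp_all add: cliques_image[OF assms])
    ultimately show "TJ_edges V E k A B \<longleftrightarrow> TJ_edges (g ` V) (image_edges g V E) k (g ` A) (g ` B)"
      using A B unfolding TJ_edges_def by simp
  qed
  ultimately show ?thesis
    unfolding graph_iso_def TJ_vertices_def by blast
qed

lemma K_TJ_memI:
  fixes HV :: "'b set"
  assumes "k \<ge> 1" and "simple_graph HV HE"
    and "graph_iso (TJ_vertices HV HE k) (TJ_edges HV HE k) V E"
  shows "k \<in> K_TJ V E"
proof -
  have "finite HV"
    using assms(2) unfolding simple_graph_def by blast
  then obtain g :: "'b \<Rightarrow> nat" where inj: "inj_on g HV"
    using finite_imp_inj_to_nat_seg by meson
  have "graph_iso (TJ_vertices (g ` HV) (image_edges g HV HE) k)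
      (TJ_edges (g ` HV) (image_edges g HV HE) k) V E"
    using graph_iso_trans[OF graph_iso_sym[OF graph_iso_TJ_image[OF assms(2) inj]] assms(3)] .
  with assms(1) simple_graph_image[OF assms(2) inj] show ?thesis
    unfolding K_TJ_def by blast
qed

lemma TJ_edges_1:
  assumes "A \<in> cliques V E 1" "B \<in> cliques V E 1" "A \<noteq> B"
  shows "TJ_edges V E 1 A B"
proof -
  obtain a b where "A = {a}" "B = {b}"
    using assms(1,2) unfolding cliques_def by (auto simp: card_1_singleton_iff)
  then show ?thesis
    using assms unfolding TJ_edges_def by auto
qed

lemma K_TJ_1_complete:
  assumes "1 \<in> K_TJ V E" "x \<in> V" "y \<in> V" "x \<noteq> y"
  shows "E x y"
proof -
  obtain HV :: "nat set" and HE where iso: "graph_iso (TJ_vertices HV HE 1) (TJ_edges HV HE 1) V E"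
    using assms(1) unfolding K_TJ_def by blast
  have "\<forall>A\<in>TJ_vertices HV HE 1. \<forall>B\<in>TJ_vertices HV HE 1. A \<noteq> B \<longrightarrow> TJ_edges HV HE 1 A B"
    using TJ_edges_1 unfolding TJ_vertices_def by blast
  then show ?thesis
    using graph_iso_adjacent[OF iso _ assms(2-4)] by blast
qed

subsection \<open>A host graph for a disjoint union of cliques\<close>

(* (i, j) with j < k - 1 is a core vertex of component i, and (i, k - 1 + j) is its j-th leaf. *)
definition host_V :: "nat \<Rightarrow> (nat \<Rightarrow> nat) \<Rightarrow> nat \<Rightarrow> (nat \<times> nat) set" where
  "host_V t n k = {(i, j). i < t \<and> j < k - 1 + n i}"

definition host_E :: "nat \<Rightarrow> (nat \<Rightarrow> nat) \<Rightarrow> nat \<Rightarrow> nat \<times> nat \<Rightarrow> nat \<times> nat \<Rightarrow> bool" where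
  "host_E t n k u v \<longleftrightarrow> u \<in> host_V t n k \<and> v \<in> host_V t n k \<and> fst u = fst v \<and> u \<noteq> v
     \<and> (snd u < k - 1 \<or> snd v < k - 1)"

definition host_clique :: "nat \<Rightarrow> nat \<times> nat \<Rightarrow> (nat \<times> nat) set" where
  "host_clique k p = {fst p} \<times> ({..<k - 1} \<union> {k - 1 + snd p})"

lemma simple_graph_host: "simple_graph (host_V t n k) (host_E t n k)"
proof -
  have "host_V t n k = Sigma {..<t} (\<lambda>i. {..<k - 1 + n i})"
    unfolding host_V_def by auto
  then show ?thesis
    unfolding simple_graph_def host_E_def by auto
qed

lemma card_host_clique: "k \<ge> 1 \<Longrightarrow> card (host_clique k p) = k"
  by (simp add: host_clique_def card_cartesian_product_singleton)

lemma inj_host_clique: "inj (host_clique k)"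
proof (rule injI)
  fix p q assume "host_clique k p = host_clique k q"
  then have "(fst p, k - 1 + snd p) \<in> host_clique k q"
    unfolding host_clique_def by blast
  then show "p = q"
    unfolding host_clique_def by (auto simp: prod_eq_iff)
qed

lemma host_clique_in_cliques:
  assumes "k \<ge> 1" and "p \<in> dcliques_V t n"
  shows "host_clique k p \<in> cliques (host_V t n k) (host_E t n k) k"
proof -
  have "host_clique k p \<subseteq> host_V t n k"
    using assms unfolding host_clique_def host_V_def dcliques_V_def by auto
  then show ?thesis
    using card_host_clique[OF assms(1)]
    unfolding cliques_def host_E_def host_clique_def by auto
qed

lemma cliques_host_same_component:
  assumes "C \<in> cliques (host_V t n k) (host_E t n k) k" "x \<in> C" "y \<in> C"
  shows "fst x = fst y"
proof (cases "x = y")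
  case False
  then have "host_E t n k x y"
    using assms unfolding cliques_def by blast
  then show ?thesis
    unfolding host_E_def by simp
qed simp

lemma cliques_host_one_leaf:
  assumes "C \<in> cliques (host_V t n k) (host_E t n k) k" "x \<in> C" "y \<in> C"
    and "snd x \<ge> k - 1" "snd y \<ge> k - 1"
  shows "x = y"
proof (rule ccontr)
  assume "x \<noteq> y"
  then have "host_E t n k x y"
    using assms(1-3) unfolding cliques_def by blast
  then show False
    using assms(4,5) unfolding host_E_def by simp
qed

lemma cliques_host:
  assumes "k \<ge> 1"
  shows "cliques (host_V t n k) (host_E t n k) k = host_clique k ` dcliques_V t n"
proof (intro equalityI subsetI)
  fix C assume C: "C \<in> cliques (host_V t n k) (host_E t n k) k"
  then have fin: "finite C" and card: "card C = k" and CV: "C \<subseteq> host_V t n k"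
    unfolding cliques_def by auto
  then have "C \<noteq> {}"
    using assms by auto
  then obtain c where "c \<in> C"
    by blast
  define i where "i = fst c"
  define core where "core = {i} \<times> {..<k - 1}"
  have component: "fst x = i" if "x \<in> C" for x
    using cliques_host_same_component[OF C that \<open>c \<in> C\<close>] by (simp add: i_def)
  have leaf: "snd x \<ge> k - 1" if "x \<in> C - core" for x
    using that component[of x] unfolding core_def by (auto simp: mem_Times_iff)
  have "card (C - core) \<le> 1"
    using cliques_host_one_leaf[OF C] leaf by (auto simp: card_le_Suc0_iff_eq fin)
  moreover have "card core = k - 1"
    unfolding core_def by (simp add: card_cartesian_product_singleton)
  moreover have "card (C \<inter> core) \<le> card core"
    by (rule card_mono) (auto simp: core_def)
  moreover have "card C = card (C \<inter> core) + card (C - core)"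
    using fin by (rule card_Int_Diff)
  ultimately have "card (C - core) = 1" and "card (C \<inter> core) = card core"
    using card assms by linarith+
  then obtain x where x: "C - core = {x}" and "core \<subseteq> C"
    using card_subset_eq[of core "C \<inter> core"] by (auto simp: core_def card_1_singleton_iff)
  then have C_eq: "C = core \<union> {x}"
    by blast
  obtain m where xm: "x = (i, m)"
    using component x by (metis insertI1 Diff_iff prod.collapse)
  have "k - 1 \<le> m" "i < t" "m < k - 1 + n i"
    using leaf[of x] x CV unfolding xm host_V_def by auto
  then have "(i, m - (k - 1)) \<in> dcliques_V t n" and "C = host_clique k (i, m - (k - 1))"
    unfolding dcliques_V_def host_clique_def C_eq core_def xm by auto
  then show "C \<in> host_clique k ` dcliques_V t n"
    by blast
qed (use host_clique_in_cliques[OF assms] in blast)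

lemma card_host_clique_Int:
  assumes "k \<ge> 2" "p \<in> dcliques_V t n" "q \<in> dcliques_V t n"
  shows "card (host_clique k p \<inter> host_clique k q) = k - 1 \<longleftrightarrow> dcliques_E t n p q"
proof (cases "fst p = fst q")
  case False
  then have "host_clique k p \<inter> host_clique k q = {}"
    unfolding host_clique_def by auto
  then show ?thesis
    using False assms(1) unfolding dcliques_E_def by auto
next
  case True
  show ?thesis
  proof (cases "p = q")
    case True
    then show ?thesis
      using card_host_clique[of k p] assms(1) unfolding dcliques_E_def by auto
  next
    case False
    then have "host_clique k p \<inter> host_clique k q = {fst p} \<times> {..<k - 1}"
      using \<open>fst p = fst q\<close> unfolding host_clique_def by (auto simp: prod_eq_iff)
    then show ?thesis
      using \<open>fst p = fst q\<close> False assms(2,3)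
      unfolding dcliques_E_def by (auto simp: card_cartesian_product_singleton prod_eq_iff)
  qed
qed

lemma graph_iso_TJ_host:
  assumes "k \<ge> 2"
  shows "graph_iso (TJ_vertices (host_V t n k) (host_E t n k) k) (TJ_edges (host_V t n k) (host_E t n k) k)
    (dcliques_V t n) (dcliques_E t n)"
proof -
  have "bij_betw (host_clique k) (dcliques_V t n) (TJ_vertices (host_V t n k) (host_E t n k) k)"
    using inj_host_clique cliques_host[of k t n] assms
    unfolding TJ_vertices_def bij_betw_def by (auto intro: inj_on_subset)
  moreover have "\<forall>p\<in>dcliques_V t n. \<forall>q\<in>dcliques_V t n. dcliques_E t n p q \<longleftrightarrow>
      TJ_edges (host_V t n k) (host_E t n k) k (host_clique k p) (host_clique k q)"
    using card_host_clique_Int[OF assms] host_clique_in_cliques assms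
    unfolding TJ_edges_def by auto
  ultimately have "graph_iso (dcliques_V t n) (dcliques_E t n)
    (TJ_vertices (host_V t n k) (host_E t n k) k) (TJ_edges (host_V t n k) (host_E t n k) k)"
    unfolding graph_iso_def by blast
  then show ?thesis
    by (rule graph_iso_sym)
qed

theorem proposition4p9:
  fixes t :: nat and n :: "nat \<Rightarrow> nat"
  assumes "t \<ge> 2" and "\<forall>i<t. n i \<ge> 1"
  shows "K_TJ (dcliques_V t n) (dcliques_E t n) = {k. k \<ge> 2}"
proof (intro equalityI subsetI)
  fix k assume k: "k \<in> K_TJ (dcliques_V t n) (dcliques_E t n)"
  have "(0, 0) \<in> dcliques_V t n" "(1, 0) \<in> dcliques_V t n"
    using assms(1) assms(2)[rule_format, of 0] assms(2)[rule_format, of 1]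
    unfolding dcliques_V_def by auto
  moreover have "\<not> dcliques_E t n (0, 0) (1, 0)"
    unfolding dcliques_E_def by simp
  ultimately have "k \<noteq> 1"
    using K_TJ_1_complete[of "dcliques_V t n"] k by fastforce
  moreover have "k \<ge> 1"
    using k unfolding K_TJ_def by simp
  ultimately show "k \<in> {k. k \<ge> 2}"
    by simp
next
  fix k :: nat assume "k \<in> {k. k \<ge> 2}"
  then show "k \<in> K_TJ (dcliques_V t n) (dcliques_E t n)"
    using K_TJ_memI[OF _ simple_graph_host graph_iso_TJ_host] by simp
qed

end
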